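(* Let $Q\in\mathbb{R}^{n\times n}$ be symmetric positive definite with $Q_{i,i}=1$ for all $i$, whose support graph is a connected tree, and let $c,\lambda\in\mathbb{R}^n$ with $\lambda_i>0$ for all $i$. Then for every node $u\in\{1,\dots,n\}$ there exist functions $p_{u,s}:\mathbb{R}\to\mathbb{R}$, indexed by $s\in\{0,1\}^{n_u-1}$, each of which is a strongly convex quadratic function (i.e. $p_{u,s}(\alpha)=a\alpha^2+b\alpha+d$ with $a>0$), such that for all $\alpha\in\mathbb{R}$, $$f_u(\alpha)=\min_{s\in\{0,1\}^{n_u-1}} p_{u,s}(\alpha)+\lambda_u\mathbb{1}_{\alpha}.$$
   Context: The support graph $\mathrm{supp}(Q)$ of a symmetric $Q\in\mathbb{R}^{n\times n}$ is the undirected graph on $\{1,\dots,n\}$ with edge $\{i,j\}$ ($i\neq j$) iff $Q_{i,j}\neq 0$. The tree is rooted at node $n$ and nodes are labeled topologically: every non-root node $u$ has a unique neighbor $\mathrm{child}(u)$ on its path to the root, and $u<\mathrm{child}(u)$; $\mathrm{par}(u)=\{v:\mathrm{child}(v)=u\}$. $\mathrm{supp}_u(Q)$ is the subtree consisting of $u$ and all nodes whose path to the root passes through $u$; $n_u$ is its number of nodes (so $u$ is the largest label in it). $Q_{[u]}$, $c_{[u]}$, $\lambda_{[u]}$ are the restrictions of $Q,c,\lambda$ to the index set of $\mathrm{supp}_u(Q)$. $\mathbb{1}_\alpha$ equals $0$ if $\alpha=0$ and $1$ otherwise. The parametric cost at node $u$ is $$f_u(\alpha)=\min_{x\in\mathbb{R}^{n_u},\,z\in\{0,1\}^{n_u}}\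 \tfrac12 x^\top Q_{[u]}x+c_{[u]}^\top x+\lambda_{[u]}^\top z\ \ \text{s.t. } x_i(1-z_i)=0\ \forall i,\ \ x_u=\alpha,$$ where $x_u$ denotes the coordinate of $x$ corresponding to node $u$. *)

theory Defs
  imports Complex_Main
begin

(* Matrices/vectors are indexed by node labels {1..n}; Q :: nat => nat => real,
   c, lambda, x :: nat => real (values outside the relevant index set are irrelevant). *)

definition supp_adj :: "nat \<Rightarrow> (nat \<Rightarrow> nat \<Rightarrow> real) \<Rightarrow> nat \<Rightarrow> nat \<Rightarrow> bool" where
  "supp_adj n Q i j \<longleftrightarrow> i \<in> {1..n} \<and> j \<in> {1..n} \<and> i \<noteq> j \<and> Q i j \<noteq> 0"

definition supp_edges :: "nat \<Rightarrow> (nat \<Rightarrow> nat \<Rightarrow> real) \<Rightarrow> nat set set" where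
  "supp_edges n Q = {{i, j} | i j. supp_adj n Q i j}"

definition graph_connected :: "nat \<Rightarrow> (nat \<Rightarrow> nat \<Rightarrow> real) \<Rightarrow> bool" where
  "graph_connected n Q \<longleftrightarrow>
     (\<forall>i\<in>{1..n}. \<forall>j\<in>{1..n}. (i, j) \<in> {(a, b). supp_adj n Q a b}\<^sup>*)"

(* a finite graph is a tree iff it is connected and has (number of vertices - 1) edges *)
definition supp_is_tree :: "nat \<Rightarrow> (nat \<Rightarrow> nat \<Rightarrow> real) \<Rightarrow> bool" where
  "supp_is_tree n Q \<longleftrightarrow> graph_connected n Q \<and> card (supp_edges n Q) = n - 1"

definition is_path :: "nat \<Rightarrow> (nat \<Rightarrow> nat \<Rightarrow> real) \<Rightarrow> nat list \<Rightarrow> nat \<Rightarrow> nat \<Rightarrow> bool" where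
  "is_path n Q p u v \<longleftrightarrow> p \<noteq> [] \<and> hd p = u \<and> last p = v \<and> distinct p \<and>
     (\<forall>k. Suc k < length p \<longrightarrow> supp_adj n Q (p ! k) (p ! Suc k))"

(* the (unique, in a tree) path from u to the root n *)
definition root_path :: "nat \<Rightarrow> (nat \<Rightarrow> nat \<Rightarrow> real) \<Rightarrow> nat \<Rightarrow> nat list" where
  "root_path n Q u = (THE p. is_path n Q p u n)"

definition child :: "nat \<Rightarrow> (nat \<Rightarrow> nat \<Rightarrow> real) \<Rightarrow> nat \<Rightarrow> nat" where
  "child n Q u = root_path n Q u ! 1"

definition subtree :: "nat \<Rightarrow> (nat \<Rightarrow> nat \<Rightarrow> real) \<Rightarrow> nat \<Rightarrow> nat set" where
  "subtree n Q u = {v \<in> {1..n}. u \<in> set (root_path n Q v)}"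

definition ind :: "real \<Rightarrow> real" where
  "ind \<alpha> = (if \<alpha> = 0 then 0 else 1)"

(* parametric cost f_u(alpha); the minimum is written as an infimum *)
definition f_cost :: "nat \<Rightarrow> (nat \<Rightarrow> nat \<Rightarrow> real) \<Rightarrow> (nat \<Rightarrow> real) \<Rightarrow> (nat \<Rightarrow> real)
                        \<Rightarrow> nat \<Rightarrow> real \<Rightarrow> real" where
  "f_cost n Q c lam u \<alpha> =
     (let V = subtree n Q u in
      Inf {(1/2) * (\<Sum>i\<in>V. \<Sum>j\<in>V. x i * Q i j * x j) + (\<Sum>i\<in>V. c i * x i)
             + (\<Sum>i\<in>V. lam i * z i)
           | x z. (\<forall>i\<in>V. z i \<in> {0, 1} \<and> x i * (1 - z i) = 0) \<and> x u = \<alpha>})"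

definition strongly_convex_quadratic :: "(real \<Rightarrow> real) \<Rightarrow> bool" where
  "strongly_convex_quadratic p \<longleftrightarrow> (\<exists>a b d. a > 0 \<and> (\<forall>\<alpha>. p \<alpha> = a * \<alpha>\<^sup>2 + b * \<alpha> + d))"

end

theory Submission
  imports Defs
begin

text \<open>
  Since the support graph is a tree, the path from \<open>u\<close> to the root is unique, so \<open>u\<close> lies
  in its own subtree \<open>V\<close>. Fix the pattern \<open>S \<subseteq> V - {u}\<close> of the other nonzero coordinates.
  Minimising the positive definite quadratic over the coordinates in \<open>S\<close> with \<open>x u = \<alpha>\<close>
  fixed is done by eliminating them one at a time by completing the square; Schur complements
  of positive definite matrices are positive definite, so what remains is a strongly convex
  quadratic in \<open>\<alpha>\<close>. The pattern contributes \<open>\<Sum>i\<in>S. \<lambda>i\<close>, the node \<open>u\<close> contributes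
  \<open>\<lambda>u \<cdot> ind \<alpha>\<close>, and the \<open>2^(card V - 1)\<close> patterns are indexed by boolean lists.
\<close>

section \<open>Simple walks in trees\<close>

definition dist_to :: "('a \<times> 'a) set \<Rightarrow> 'a \<Rightarrow> 'a \<Rightarrow> nat" where
  "dist_to R r v = (LEAST k. (v, r) \<in> R ^^ k)"

lemma dist_to_step:
  assumes "(v, r) \<in> R\<^sup>*" "v \<noteq> r"
  obtains w where "(v, w) \<in> R" "Suc (dist_to R r w) = dist_to R r v"
proof -
  have reach: "(v, r) \<in> R ^^ dist_to R r v"
    unfolding dist_to_def using assms(1) by (metis LeastI rtrancl_power)
  then obtain m where m: "dist_to R r v = Suc m" using assms(2) by (cases "dist_to R r v") auto
  then obtain w where w: "(v, w) \<in> R" "(w, r) \<in> R ^^ m" using reach relpow_Suc_D2 by metis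
  have "dist_to R r w \<le> m" unfolding dist_to_def using w(2) by (rule Least_le)
  moreover have "(w, r) \<in> R ^^ dist_to R r w"
    unfolding dist_to_def using w(2) by (rule LeastI)
  then have "dist_to R r v \<le> Suc (dist_to R r w)"
    unfolding dist_to_def using w(1) by (intro Least_le relpow_Suc_I2)
  ultimately show ?thesis using that w(1) m by simp
qed

lemma card_edges_ge_of_connected:
  assumes fin: "finite V" and RV: "R \<subseteq> V \<times> V" and r: "r \<in> V"
    and conn: "\<forall>v\<in>V. (v, r) \<in> R\<^sup>*"
  shows "card V - 1 \<le> card {{a, b} | a b. (a, b) \<in> R}"
proof -
  define E where "E = {{a, b} | a b. (a, b) \<in> R}"
  define next_hop where "next_hop v = (SOME w. (v, w) \<in> R \<and> Suc (dist_to R r w) = dist_to R r v)" for v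
  have next_hop: "(v, next_hop v) \<in> R \<and> Suc (dist_to R r (next_hop v)) = dist_to R r v"
    if "v \<in> V - {r}" for v
    unfolding next_hop_def using that conn by (metis (mono_tags, lifting) DiffE dist_to_step singletonI someI)
  have "finite E"
  proof (rule finite_subset)
    show "E \<subseteq> (\<lambda>(a, b). {a, b}) ` (V \<times> V)" unfolding E_def using RV by auto
  qed (use fin in simp)
  \<comment> \<open>The hop decreases the distance to \<open>r\<close>, so no edge is the hop of both of its ends.\<close>
  moreover have "inj_on (\<lambda>v. {v, next_hop v}) (V - {r})"
  proof (rule inj_onI)
    fix v w assume v: "v \<in> V - {r}" and w: "w \<in> V - {r}" and eq: "{v, next_hop v} = {w, next_hop w}"
    show "v = w"
    proof (rule ccontr)
      assume "v \<noteq> w"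
      then have "v = next_hop w" "w = next_hop v" using eq by (auto simp: doubleton_eq_iff)
      then show False using next_hop[OF v] next_hop[OF w] by auto
    qed
  qed
  moreover have "(\<lambda>v. {v, next_hop v}) ` (V - {r}) \<subseteq> E" unfolding E_def using next_hop by blast
  ultimately have "card (V - {r}) \<le> card E" by (metis card_inj_on_le)
  then show ?thesis using r fin unfolding E_def by simp
qed

lemma edge_not_reachable_after_removal:
  assumes fin: "finite V" and RV: "R \<subseteq> V \<times> V" and r: "r \<in> V"
    and conn: "\<forall>v\<in>V. (v, r) \<in> R\<^sup>*" and sym: "sym R"
    and card_edges: "card {{a, b} | a b. (a, b) \<in> R} = card V - 1"
    and ab: "(a, b) \<in> R" "a \<noteq> b"
  shows "(a, b) \<notin> (R - {(a, b), (b, a)})\<^sup>*"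
proof
  define R' where "R' = R - {(a, b), (b, a)}"
  define E where "E = {{a, b} | a b. (a, b) \<in> R}"
  assume "(a, b) \<in> (R - {(a, b), (b, a)})\<^sup>*"
  moreover have "sym R'" using sym unfolding R'_def sym_def by auto
  ultimately have ab': "(a, b) \<in> R'\<^sup>*" "(b, a) \<in> R'\<^sup>*"
    unfolding R'_def by (auto intro: sym_rtrancl[THEN symD])
  have "(x, y) \<in> R'\<^sup>*" if "(x, y) \<in> R\<^sup>*" for x y
    using that
  proof (induction rule: rtrancl_induct)
    case (step y z)
    then show ?case
      using ab' by (cases "(y, z) \<in> {(a, b), (b, a)}") (auto simp: R'_def intro: rtrancl_trans)
  qed simp
  then have "card V - 1 \<le> card {{x, y} | x y. (x, y) \<in> R'}"
    using conn RV r fin by (intro card_edges_ge_of_connected) (auto simp: R'_def)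
  also have "\<dots> \<le> card (E - {{a, b}})"
  proof (rule card_mono)
    have "E \<subseteq> (\<lambda>(a, b). {a, b}) ` (V \<times> V)" unfolding E_def using RV by auto
    then show "finite (E - {{a, b}})" using fin by (simp add: finite_subset)
    show "{{x, y} | x y. (x, y) \<in> R'} \<subseteq> E - {{a, b}}"
    proof
      fix e assume "e \<in> {{x, y} | x y. (x, y) \<in> R'}"
      then obtain x y where "e = {x, y}" "(x, y) \<in> R" "(x, y) \<notin> {(a, b), (b, a)}"
        unfolding R'_def by blast
      then show "e \<in> E - {{a, b}}" unfolding E_def by (auto simp: doubleton_eq_iff)
    qed
  qed
  also have "\<dots> = card V - 2"
    using ab card_edges unfolding E_def by (subst card_Diff_singleton) auto
  finally have "card V - 1 \<le> card V - 2" .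
  moreover have "{a, b} \<subseteq> V" using ab(1) RV by auto
  then have "card {a, b} \<le> card V" by (rule card_mono[OF fin])
  ultimately show False using ab(2) by simp
qed

definition simple_walk :: "('a \<times> 'a) set \<Rightarrow> 'a list \<Rightarrow> 'a \<Rightarrow> 'a \<Rightarrow> bool" where
  "simple_walk R p u v \<longleftrightarrow>
     p \<noteq> [] \<and> hd p = u \<and> last p = v \<and> distinct p \<and> successively (\<lambda>x y. (x, y) \<in> R) p"

lemma successively_rtrancl:
  "successively (\<lambda>x y. (x, y) \<in> R) p \<Longrightarrow> p \<noteq> [] \<Longrightarrow> (hd p, last p) \<in> R\<^sup>*"
  by (induction p) (auto simp: successively_Cons intro: converse_rtrancl_into_rtrancl)

lemma simple_walk_rtrancl: "simple_walk R p u v \<Longrightarrow> (u, v) \<in> R\<^sup>*"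
  unfolding simple_walk_def using successively_rtrancl by blast

lemma simple_walk_exists:
  assumes "(u, v) \<in> R\<^sup>*"
  shows "\<exists>p. simple_walk R p u v"
  using assms
proof (induction rule: converse_rtrancl_induct)
  case base
  show ?case by (intro exI[of _ "[v]"]) (simp add: simple_walk_def)
next
  case (step x y)
  then obtain p where p: "simple_walk R p y v" by blast
  show ?case
  proof (cases "x \<in> set p")
    case True
    \<comment> \<open>Shortcut the walk at its visit to \<open>x\<close>.\<close>
    then obtain ys zs where "p = ys @ x # zs" by (meson split_list)
    with p have "simple_walk R (x # zs) x v"
      by (auto simp: simple_walk_def successively_append_iff)
    then show ?thesis by blast
  next
    case False
    with p step(1) have "simple_walk R (x # p) x v"
      by (auto simp: simple_walk_def successively_Cons)
    then show ?thesis by blast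
  qed
qed

lemma simple_walk_loop: "simple_walk R w u u \<Longrightarrow> w = [u]"
  unfolding simple_walk_def
  by (metis distinct.simps(2) hd_Cons_tl last.simps last_in_set list.sel(1))

lemma simple_walk_unique:
  assumes sym: "sym R" and irrefl: "\<forall>x. (x, x) \<notin> R"
    and bridge: "\<forall>a b. (a, b) \<in> R \<longrightarrow> (a, b) \<notin> (R - {(a, b), (b, a)})\<^sup>*"
  shows "simple_walk R p u v \<Longrightarrow> simple_walk R q u v \<Longrightarrow> p = q"
proof (induction p arbitrary: u q)
  case Nil
  then show ?case by (simp add: simple_walk_def)
next
  case (Cons x p')
  show ?case
  proof (cases "p' = [] \<or> q = [u] \<or> tl q = []")
    case True
    then show ?thesis using Cons.prems simple_walk_loop
      by (metis hd_Cons_tl last.simps list.sel(1) simple_walk_def)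
  next
    case False
    then obtain y p'' y' q'' where p: "x # p' = x # y # p''" and q: "q = x # y' # q''"
      using Cons.prems unfolding simple_walk_def by (metis hd_Cons_tl list.sel(1))
    have tail_p: "simple_walk R (y # p'') y v" and xy: "(x, y) \<in> R" and x_p: "x \<notin> set (y # p'')"
      using Cons.prems(1) p False unfolding simple_walk_def by auto
    have tail_q: "simple_walk R (y' # q'') y' v" and xy': "(x, y') \<in> R" and x_q: "x \<notin> set (y' # q'')"
      using Cons.prems(2) q False unfolding simple_walk_def by auto
    show ?thesis
    proof (cases "y = y'")
      case True
      then show ?thesis using Cons.IH[OF _ tail_q] tail_p p q by simp
    next
      case False
      \<comment> \<open>Otherwise the two walks join \<open>y\<close> to \<open>x\<close> without the edge \<open>{x, y}\<close>.\<close>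
      define R' where "R' = R - {(x, y), (y, x)}"
      have "(y, v) \<in> R'\<^sup>*"
      proof (rule simple_walk_rtrancl)
        show "simple_walk R' (y # p'') y v"
          using tail_p x_p unfolding simple_walk_def R'_def by (auto elim: successively_mono)
      qed
      moreover have "(x, v) \<in> R'\<^sup>*"
      proof (rule simple_walk_rtrancl)
        show "simple_walk R' q x v"
          using Cons.prems(2) q x_q False xy irrefl unfolding simple_walk_def R'_def
          by (auto elim: successively_mono)
      qed
      moreover have "sym R'" using sym unfolding R'_def sym_def by auto
      ultimately have "(x, y) \<in> R'\<^sup>*"
        by (metis rtrancl_trans sym_rtrancl symD)
      then show ?thesis using bridge xy unfolding R'_def by blast
    qed
  qed
qed

definition supp_rel :: "nat \<Rightarrow> (nat \<Rightarrow> nat \<Rightarrow> real) \<Rightarrow> (nat \<times> nat) set" where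
  "supp_rel n Q = {(i, j). supp_adj n Q i j}"

lemma is_path_iff_simple_walk: "is_path n Q p u v \<longleftrightarrow> simple_walk (supp_rel n Q) p u v"
  by (simp add: is_path_def simple_walk_def supp_rel_def successively_conv_nth)

lemma root_path_is_path:
  assumes sym: "\<forall>i\<in>{1..n}. \<forall>j\<in>{1..n}. Q i j = Q j i"
    and tree: "supp_is_tree n Q" and u: "u \<in> {1..n}"
  shows "is_path n Q (root_path n Q u) u n"
proof -
  define R where "R = supp_rel n Q"
  have RV: "R \<subseteq> {1..n} \<times> {1..n}" and irrefl: "\<forall>x. (x, x) \<notin> R"
    unfolding R_def supp_rel_def supp_adj_def by auto
  have symR: "sym R" using sym unfolding sym_def R_def supp_rel_def supp_adj_def by auto
  have conn: "\<forall>v\<in>{1..n}. (v, n) \<in> R\<^sup>*"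
    using tree u unfolding supp_is_tree_def graph_connected_def R_def supp_rel_def by auto
  have "card {{a, b} | a b. (a, b) \<in> R} = card {1..n} - 1"
    using tree unfolding supp_is_tree_def supp_edges_def R_def supp_rel_def by simp
  then have bridge: "\<forall>a b. (a, b) \<in> R \<longrightarrow> (a, b) \<notin> (R - {(a, b), (b, a)})\<^sup>*"
    using edge_not_reachable_after_removal[OF finite_atLeastAtMost RV _ conn symR] u irrefl
    by fastforce
  obtain p where "simple_walk R p u n" using simple_walk_exists[of u n R] conn u by blast
  then have "\<exists>!p. is_path n Q p u n"
    using simple_walk_unique[OF symR irrefl bridge] unfolding is_path_iff_simple_walk R_def by blast
  then show ?thesis unfolding root_path_def by (rule theI')
qed

lemma mem_subtree_self:
  assumes "\<forall>i\<in>{1..n}. \<forall>j\<in>{1..n}. Q i j = Q j i"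
    and "supp_is_tree n Q" and "u \<in> {1..n}"
  shows "u \<in> subtree n Q u"
  using root_path_is_path[OF assms] assms(3)
  unfolding subtree_def is_path_def by (metis (mono_tags, lifting) hd_in_set mem_Collect_eq)

section \<open>Partial minimisation of quadratic functions\<close>

definition qform :: "('a \<Rightarrow> 'a \<Rightarrow> real) \<Rightarrow> 'a set \<Rightarrow> ('a \<Rightarrow> real) \<Rightarrow> real" where
  "qform A T x = (\<Sum>i\<in>T. \<Sum>j\<in>T. x i * A i j * x j)"

definition lform :: "('a \<Rightarrow> real) \<Rightarrow> 'a set \<Rightarrow> ('a \<Rightarrow> real) \<Rightarrow> real" where
  "lform b T x = (\<Sum>i\<in>T. b i * x i)"

definition symmetric_on :: "('a \<Rightarrow> 'a \<Rightarrow> real) \<Rightarrow> 'a set \<Rightarrow> bool" where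
  "symmetric_on A T \<longleftrightarrow> (\<forall>i\<in>T. \<forall>k\<in>T. A i k = A k i)"

definition pos_def_on :: "('a \<Rightarrow> 'a \<Rightarrow> real) \<Rightarrow> 'a set \<Rightarrow> bool" where
  "pos_def_on A T \<longleftrightarrow> (\<forall>x. (\<exists>i\<in>T. x i \<noteq> 0) \<longrightarrow> qform A T x > 0)"

definition schur_complement :: "('a \<Rightarrow> 'a \<Rightarrow> real) \<Rightarrow> 'a \<Rightarrow> 'a \<Rightarrow> 'a \<Rightarrow> real" where
  "schur_complement A j = (\<lambda>i k. A i k - A j i * A j k / A j j)"

definition is_partial_min :: "(('a \<Rightarrow> real) \<Rightarrow> real) \<Rightarrow> 'a \<Rightarrow> (real \<Rightarrow> real) \<Rightarrow> bool" where
  "is_partial_min F u q \<longleftrightarrow> (\<forall>x. q (x u) \<le> F x) \<and> (\<forall>\<alpha>. \<exists>x. x u = \<alpha> \<and> F x = q \<alpha>)"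

lemma qform_cong: "(\<And>i. i \<in> T \<Longrightarrow> x i = y i) \<Longrightarrow> qform A T x = qform A T y"
  unfolding qform_def by (intro sum.cong refl) auto

lemma lform_cong: "(\<And>i. i \<in> T \<Longrightarrow> x i = y i) \<Longrightarrow> lform b T x = lform b T y"
  unfolding lform_def by (intro sum.cong refl) auto

lemma qform_restrict:
  assumes "finite V" "T \<subseteq> V" "\<forall>i\<in>V - T. x i = 0"
  shows "qform A V x = qform A T x"
proof -
  have "qform A V x = (\<Sum>i\<in>V. \<Sum>j\<in>T. x i * A i j * x j)"
    unfolding qform_def by (intro sum.cong refl sum.mono_neutral_right) (use assms in auto)
  also have "\<dots> = qform A T x"
    unfolding qform_def by (intro sum.mono_neutral_right) (use assms in auto)
  finally show ?thesis .
qed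

lemma lform_restrict:
  assumes "finite V" "T \<subseteq> V" "\<forall>i\<in>V - T. x i = 0"
  shows "lform b V x = lform b T x"
  unfolding lform_def by (intro sum.mono_neutral_right) (use assms in auto)

lemma qform_insert:
  assumes fin: "finite T" and j: "j \<notin> T" and sym: "symmetric_on A (insert j T)"
  shows "qform A (insert j T) x = A j j * (x j)\<^sup>2 + 2 * x j * (\<Sum>k\<in>T. A j k * x k) + qform A T x"
proof -
  have "qform A (insert j T) x =
      (x j * A j j * x j + (\<Sum>k\<in>T. x j * A j k * x k)) +
      ((\<Sum>i\<in>T. x i * A i j * x j) + qform A T x)"
    unfolding qform_def using fin j by (simp add: sum.distrib)
  also have "(\<Sum>i\<in>T. x i * A i j * x j) = (\<Sum>k\<in>T. x j * A j k * x k)"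
  proof (intro sum.cong refl)
    fix i assume "i \<in> T"
    then have "A i j = A j i" using sym unfolding symmetric_on_def by blast
    then show "x i * A i j * x j = x j * A j i * x i" by simp
  qed
  also have "(\<Sum>k\<in>T. x j * A j k * x k) = x j * (\<Sum>k\<in>T. A j k * x k)"
    by (simp add: sum_distrib_left mult.assoc)
  finally show ?thesis by (simp add: power2_eq_square)
qed

lemma lform_insert: "finite T \<Longrightarrow> j \<notin> T \<Longrightarrow> lform b (insert j T) x = b j * x j + lform b T x"
  unfolding lform_def by simp

lemma qform_schur_complement:
  "qform (schur_complement A j) T x = qform A T x - (\<Sum>k\<in>T. A j k * x k)\<^sup>2 / A j j"
proof -
  have "qform (schur_complement A j) T x =
      qform A T x - (\<Sum>i\<in>T. \<Sum>k\<in>T. (A j i * x i) * (A j k * x k)) / A j j"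
    unfolding qform_def schur_complement_def
    by (simp add: algebra_simps sum_subtractf sum_divide_distrib)
  also have "(\<Sum>i\<in>T. \<Sum>k\<in>T. (A j i * x i) * (A j k * x k)) = (\<Sum>k\<in>T. A j k * x k)\<^sup>2"
    by (simp add: power2_eq_square sum_product)
  finally show ?thesis .
qed

lemma lform_schur_complement:
  "lform (\<lambda>i. b i - b j * A j i / A j j) T x = lform b T x - b j * (\<Sum>k\<in>T. A j k * x k) / A j j"
  unfolding lform_def by (simp add: algebra_simps sum_subtractf sum_divide_distrib sum_distrib_left)

lemma quadratic_complete_square:
  assumes "finite T" "j \<notin> T" "symmetric_on A (insert j T)" "A j j \<noteq> 0"
  shows "qform A (insert j T) x / 2 + lform b (insert j T) x + d =
    A j j / 2 * (x j + ((\<Sum>k\<in>T. A j k * x k) + b j) / A j j)\<^sup>2 +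
    (qform (schur_complement A j) T x / 2 + lform (\<lambda>i. b i - b j * A j i / A j j) T x
      + (d - (b j)\<^sup>2 / (2 * A j j)))"
  unfolding qform_insert[OF assms(1-3)] lform_insert[OF assms(1,2)]
    qform_schur_complement lform_schur_complement
  using assms(4) by (simp add: field_simps power2_eq_square)

lemma symmetric_on_schur_complement:
  "symmetric_on A (insert j T) \<Longrightarrow> symmetric_on (schur_complement A j) T"
  unfolding symmetric_on_def schur_complement_def by (metis insertCI mult.commute)

lemma pos_def_on_diag_pos:
  assumes "finite T" "j \<in> T" "pos_def_on A T"
  shows "A j j > 0"
proof -
  define e where "e i = (if i = j then 1 else (0::real))" for i
  have "qform A T e = qform A {j} e"
    using assms(1,2) by (intro qform_restrict) (auto simp: e_def)
  also have "\<dots> = A j j" by (simp add: qform_def e_def)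
  finally have "qform A T e = A j j" .
  moreover have "\<exists>i\<in>T. e i \<noteq> 0" using assms(2) by (auto simp: e_def)
  ultimately show ?thesis using assms(3) unfolding pos_def_on_def by metis
qed

lemma pos_def_on_subset:
  assumes "finite V" "T \<subseteq> V" "pos_def_on A V"
  shows "pos_def_on A T"
  unfolding pos_def_on_def
proof (intro allI impI)
  fix x :: "'a \<Rightarrow> real" assume x: "\<exists>i\<in>T. x i \<noteq> 0"
  define x' where "x' i = (if i \<in> T then x i else 0)" for i
  have "\<exists>i\<in>V. x' i \<noteq> 0" using x assms(2) unfolding x'_def by auto
  then have "0 < qform A V x'" using assms(3) unfolding pos_def_on_def by blast
  also have "qform A V x' = qform A T x'"
    using assms(1,2) by (rule qform_restrict) (simp add: x'_def)
  also have "\<dots> = qform A T x" by (rule qform_cong) (simp add: x'_def)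
  finally show "qform A T x > 0" .
qed

lemma pos_def_on_schur_complement:
  assumes "finite T" "j \<notin> T" "symmetric_on A (insert j T)" "pos_def_on A (insert j T)"
  shows "pos_def_on (schur_complement A j) T"
  unfolding pos_def_on_def
proof (intro allI impI)
  fix y :: "'a \<Rightarrow> real" assume y: "\<exists>i\<in>T. y i \<noteq> 0"
  have "A j j > 0" using pos_def_on_diag_pos[OF _ _ assms(4)] assms(1) by simp
  then have Ajj: "A j j \<noteq> 0" by simp
  define L where "L = (\<Sum>k\<in>T. A j k * y k)"
  \<comment> \<open>Choose \<open>x j\<close> so that the completed square vanishes.\<close>
  define x where "x = y(j := - L / A j j)"
  have xy: "\<And>i. i \<in> T \<Longrightarrow> x i = y i" unfolding x_def using assms(2) by auto
  then have "(\<Sum>k\<in>T. A j k * x k) = L" unfolding L_def by (intro sum.cong) auto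
  then have "qform A (insert j T) x / 2 = qform (schur_complement A j) T x / 2"
    using quadratic_complete_square[OF assms(1-3) Ajj, of x "\<lambda>_. 0" 0] Ajj
    by (simp add: x_def lform_def)
  moreover have "qform A (insert j T) x > 0"
    using assms(4) y xy unfolding pos_def_on_def by (metis insertCI)
  moreover have "qform (schur_complement A j) T x = qform (schur_complement A j) T y"
    using xy by (rule qform_cong)
  ultimately show "qform (schur_complement A j) T y > 0" by simp
qed

lemma is_partial_min_complete_square:
  assumes F: "\<And>x. F x = a * (x j + g x)\<^sup>2 + G x" and "a \<ge> 0" and "j \<noteq> u"
    and indep: "\<And>x y. (\<And>i. i \<noteq> j \<Longrightarrow> x i = y i) \<Longrightarrow> g x = g y \<and> G x = G y"
    and G: "is_partial_min G u q"
  shows "is_partial_min F u q"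
  unfolding is_partial_min_def
proof (intro conjI allI)
  fix x
  show "q (x u) \<le> F x" using G F[of x] \<open>a \<ge> 0\<close> unfolding is_partial_min_def
    by (metis add.commute add_increasing2 zero_le_power2 mult_nonneg_nonneg)
next
  fix \<alpha>
  obtain y where y: "y u = \<alpha>" "G y = q \<alpha>" using G unfolding is_partial_min_def by blast
  define x where "x = y(j := - g y)"
  have "g x = g y \<and> G x = G y" using indep[of x y] unfolding x_def by simp
  then show "\<exists>x. x u = \<alpha> \<and> F x = q \<alpha>"
    using F[of x] y \<open>j \<noteq> u\<close> by (intro exI[of _ x]) (simp add: x_def)
qed

lemma quadratic_partial_min_singleton:
  assumes "A u u > 0"
  shows "\<exists>q. strongly_convex_quadratic q \<and>
    is_partial_min (\<lambda>x. qform A {u} x / 2 + lform b {u} x + d) u q"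
proof -
  define q where "q \<alpha> = A u u / 2 * \<alpha>\<^sup>2 + b u * \<alpha> + d" for \<alpha>
  have "strongly_convex_quadratic q"
    unfolding strongly_convex_quadratic_def q_def using assms
    by (intro exI[of _ "A u u / 2"] exI[of _ "b u"] exI[of _ d]) auto
  moreover have "qform A {u} x / 2 + lform b {u} x + d = q (x u)" for x
    unfolding qform_def lform_def q_def by (simp add: power2_eq_square)
  then have "is_partial_min (\<lambda>x. qform A {u} x / 2 + lform b {u} x + d) u q"
    unfolding is_partial_min_def by auto
  ultimately show ?thesis by auto
qed

lemma quadratic_partial_min:
  assumes "finite S" "u \<notin> S"
  shows "symmetric_on A (insert u S) \<Longrightarrow> pos_def_on A (insert u S) \<Longrightarrow>
    \<exists>q. strongly_convex_quadratic q \<and>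
      is_partial_min (\<lambda>x. qform A (insert u S) x / 2 + lform b (insert u S) x + d) u q"
  using assms
proof (induction S arbitrary: A b d rule: finite_induct)
  case empty
  have "A u u > 0" using pos_def_on_diag_pos[OF _ _ empty.prems(2)] by simp
  then show ?case by (rule quadratic_partial_min_singleton)
next
  case (insert j S)
  define T where "T = insert u S"
  have T: "insert u (insert j S) = insert j T" and "finite T" "j \<notin> T" "j \<noteq> u"
    using insert unfolding T_def by auto
  have sym: "symmetric_on A (insert j T)" and pd: "pos_def_on A (insert j T)"
    using insert.prems unfolding T by auto
  have "A j j > 0" using pos_def_on_diag_pos[OF _ _ pd] \<open>finite T\<close> by simp
  define L where "L x = (\<Sum>k\<in>T. A j k * x k)" for x
  define b' where "b' i = b i - b j * A j i / A j j" for i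
  define d' where "d' = d - (b j)\<^sup>2 / (2 * A j j)"
  define F' where "F' x = qform (schur_complement A j) T x / 2 + lform b' T x + d'" for x
  obtain q where q: "strongly_convex_quadratic q" "is_partial_min F' u q"
    using insert.IH[of "schur_complement A j" b' d'] insert.prems(3)
      symmetric_on_schur_complement[OF sym]
      pos_def_on_schur_complement[OF \<open>finite T\<close> \<open>j \<notin> T\<close> sym pd]
    unfolding T_def F'_def by auto
  have "is_partial_min (\<lambda>x. qform A (insert j T) x / 2 + lform b (insert j T) x + d) u q"
  proof (rule is_partial_min_complete_square[OF _ _ \<open>j \<noteq> u\<close> _ q(2)])
    show "qform A (insert j T) x / 2 + lform b (insert j T) x + d =
        A j j / 2 * (x j + (L x + b j) / A j j)\<^sup>2 + F' x" for x
      unfolding F'_def L_def b'_def d'_def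
      using quadratic_complete_square[OF \<open>finite T\<close> \<open>j \<notin> T\<close> sym] \<open>A j j > 0\<close> by simp
    show "A j j / 2 \<ge> 0" using \<open>A j j > 0\<close> by simp
    fix x y :: "'a \<Rightarrow> real" assume "\<And>i. i \<noteq> j \<Longrightarrow> x i = y i"
    then have xy: "\<And>i. i \<in> T \<Longrightarrow> x i = y i" using \<open>j \<notin> T\<close> by metis
    have "L x = L y" unfolding L_def using xy by (intro sum.cong) auto
    moreover have "qform (schur_complement A j) T x = qform (schur_complement A j) T y"
      "lform b' T x = lform b' T y"
      by (rule qform_cong, fact xy) (rule lform_cong, fact xy)
    then have "F' x = F' y" unfolding F'_def by simp
    ultimately show "(L x + b j) / A j j = (L y + b j) / A j j \<and> F' x = F' y" by simp
  qed
  then show ?case using q(1) unfolding T by blast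
qed

section \<open>The parametric cost\<close>

definition sparse_qp_values ::
  "('a \<Rightarrow> 'a \<Rightarrow> real) \<Rightarrow> ('a \<Rightarrow> real) \<Rightarrow> ('a \<Rightarrow> real) \<Rightarrow> 'a set \<Rightarrow> 'a \<Rightarrow> real \<Rightarrow> real set" where
  "sparse_qp_values Q c lam V u \<alpha> =
     {qform Q V x / 2 + lform c V x + (\<Sum>i\<in>V. lam i * z i)
      | x z. (\<forall>i\<in>V. z i \<in> {0, 1} \<and> x i * (1 - z i) = 0) \<and> x u = \<alpha>}"

lemma f_cost_eq_Inf_sparse_qp_values:
  "f_cost n Q c lam u \<alpha> = Inf (sparse_qp_values Q c lam (subtree n Q u) u \<alpha>)"
  unfolding f_cost_def sparse_qp_values_def qform_def lform_def Let_def by simp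

lemma sparse_objective_on_support:
  assumes fin: "finite V" and u: "u \<in> V" and S: "S \<subseteq> V - {u}"
    and x: "\<forall>i\<in>V - insert u S. x i = 0"
    and z: "\<forall>i\<in>S. z i = 1" "\<forall>i\<in>V - insert u S. z i = 0"
  shows "qform Q V x / 2 + lform c V x + (\<Sum>i\<in>V. lam i * z i) =
    qform Q (insert u S) x / 2 + lform c (insert u S) x + (lam u * z u + sum lam S)"
proof -
  have T: "insert u S \<subseteq> V" and "u \<notin> S" and "finite S" using S u fin finite_subset by auto
  have "(\<Sum>i\<in>V. lam i * z i) = (\<Sum>i\<in>insert u S. lam i * z i)"
    using fin T z(2) by (intro sum.mono_neutral_right) auto
  also have "\<dots> = lam u * z u + sum lam S"
    using \<open>u \<notin> S\<close> \<open>finite S\<close> z(1) by simp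
  finally show ?thesis
    using qform_restrict[OF fin T x] lform_restrict[OF fin T x] by simp
qed

lemma pattern_value_mem_sparse_qp_values:
  assumes fin: "finite V" and u: "u \<in> V" and S: "S \<subseteq> V - {u}"
    and q: "is_partial_min (\<lambda>x. qform Q (insert u S) x / 2 + lform c (insert u S) x) u q"
  shows "q \<alpha> + sum lam S + lam u * ind \<alpha> \<in> sparse_qp_values Q c lam V u \<alpha>"
proof -
  obtain x0 where x0: "x0 u = \<alpha>"
    "qform Q (insert u S) x0 / 2 + lform c (insert u S) x0 = q \<alpha>"
    using q unfolding is_partial_min_def by blast
  define x where "x i = (if i \<in> insert u S then x0 i else 0)" for i
  define z where "z i = (if i \<in> S \<or> (i = u \<and> \<alpha> \<noteq> 0) then 1 else (0::real))" for i
  have feas: "\<forall>i\<in>V. z i \<in> {0, 1} \<and> x i * (1 - z i) = 0" and xu: "x u = \<alpha>"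
    using x0(1) unfolding x_def z_def by auto
  have "\<forall>i\<in>V - insert u S. x i = 0" "\<forall>i\<in>S. z i = 1" "\<forall>i\<in>V - insert u S. z i = 0"
    unfolding x_def z_def by auto
  from sparse_objective_on_support[OF fin u S this]
  have "qform Q V x / 2 + lform c V x + (\<Sum>i\<in>V. lam i * z i) =
      qform Q (insert u S) x / 2 + lform c (insert u S) x + (lam u * z u + sum lam S)" .
  also have "qform Q (insert u S) x = qform Q (insert u S) x0"
    by (rule qform_cong) (simp add: x_def)
  also have "lform c (insert u S) x = lform c (insert u S) x0"
    by (rule lform_cong) (simp add: x_def)
  also have "z u = ind \<alpha>" using S unfolding z_def ind_def by auto
  finally have "qform Q V x / 2 + lform c V x + (\<Sum>i\<in>V. lam i * z i) =
      q \<alpha> + sum lam S + lam u * ind \<alpha>"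
    using x0(2) by simp
  with feas xu show ?thesis
    unfolding sparse_qp_values_def mem_Collect_eq by (intro exI[of _ x] exI[of _ z] conjI) auto
qed

lemma sparse_qp_values_ge_pattern_value:
  assumes fin: "finite V" and u: "u \<in> V" and lam_u: "lam u \<ge> 0"
    and q: "\<And>S. S \<subseteq> V - {u} \<Longrightarrow>
      is_partial_min (\<lambda>x. qform Q (insert u S) x / 2 + lform c (insert u S) x) u (q S)"
    and v: "v \<in> sparse_qp_values Q c lam V u \<alpha>"
  shows "\<exists>S\<subseteq>V - {u}. q S \<alpha> + sum lam S + lam u * ind \<alpha> \<le> v"
proof -
  obtain x z where v: "v = qform Q V x / 2 + lform c V x + (\<Sum>i\<in>V. lam i * z i)"
    and feas: "\<forall>i\<in>V. z i \<in> {0, 1} \<and> x i * (1 - z i) = 0" and xu: "x u = \<alpha>"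
    using v unfolding sparse_qp_values_def by blast
  define S where "S = {i \<in> V - {u}. z i = 1}"
  have S: "S \<subseteq> V - {u}" unfolding S_def by blast
  have z_off: "\<forall>i\<in>V - insert u S. z i = 0" using feas unfolding S_def by auto
  then have "\<forall>i\<in>V - insert u S. x i = 0" using feas by (metis DiffD1 diff_zero mult_1_right)
  moreover have "\<forall>i\<in>S. z i = 1" unfolding S_def by blast
  ultimately have "v = qform Q (insert u S) x / 2 + lform c (insert u S) x + (lam u * z u + sum lam S)"
    unfolding v using sparse_objective_on_support[OF fin u S] z_off by blast
  moreover have "q S \<alpha> \<le> qform Q (insert u S) x / 2 + lform c (insert u S) x"
    using q[OF S] xu unfolding is_partial_min_def by metis
  moreover have "ind \<alpha> \<le> z u"
  proof (cases "\<alpha> = 0")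
    case False
    then have "z u = 1" using feas u xu by auto
    then show ?thesis by (simp add: ind_def)
  qed (use feas u in \<open>auto simp: ind_def\<close>)
  then have "lam u * ind \<alpha> \<le> lam u * z u" using lam_u by (rule mult_left_mono)
  ultimately have "q S \<alpha> + sum lam S + lam u * ind \<alpha> \<le> v" by linarith
  with S show ?thesis by blast
qed

lemma Inf_sparse_qp_values_eq_Min:
  assumes fin: "finite V" and u: "u \<in> V" and lam_u: "lam u \<ge> 0"
    and q: "\<And>S. S \<subseteq> V - {u} \<Longrightarrow>
      is_partial_min (\<lambda>x. qform Q (insert u S) x / 2 + lform c (insert u S) x) u (q S)"
  shows "Inf (sparse_qp_values Q c lam V u \<alpha>) =
    Min ((\<lambda>S. q S \<alpha> + sum lam S) ` Pow (V - {u})) + lam u * ind \<alpha>"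
proof -
  define M where "M = Min ((\<lambda>S. q S \<alpha> + sum lam S) ` Pow (V - {u}))"
  have M_le: "M \<le> q S \<alpha> + sum lam S" if "S \<subseteq> V - {u}" for S
    unfolding M_def using fin that by (intro Min_le) auto
  have "M \<in> (\<lambda>S. q S \<alpha> + sum lam S) ` Pow (V - {u})"
    unfolding M_def using fin by (intro Min_in) auto
  then obtain S0 where S0: "S0 \<subseteq> V - {u}" "M = q S0 \<alpha> + sum lam S0" by auto
  show ?thesis
    unfolding M_def[symmetric]
  proof (rule cInf_eq_minimum)
    show "M + lam u * ind \<alpha> \<in> sparse_qp_values Q c lam V u \<alpha>"
      unfolding S0(2) using pattern_value_mem_sparse_qp_values[OF fin u S0(1) q[OF S0(1)]] .
  next
    fix v assume "v \<in> sparse_qp_values Q c lam V u \<alpha>"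
    from sparse_qp_values_ge_pattern_value[where lam = lam, OF fin u lam_u q this]
    obtain S where "S \<subseteq> V - {u}" "q S \<alpha> + sum lam S + lam u * ind \<alpha> \<le> v" by blast
    with M_le[of S] show "M + lam u * ind \<alpha> \<le> v" by linarith
  qed
qed

lemma bool_lists_onto_Pow:
  assumes "finite W"
  shows "\<exists>sel :: bool list \<Rightarrow> 'a set. sel ` {s. length s = card W} = Pow W"
proof -
  obtain ws where ws: "set ws = W" "distinct ws" using finite_distinct_list[OF assms] by blast
  have len: "length ws = card W" using distinct_card[OF ws(2)] ws(1) by simp
  define sel where "sel s = {ws ! i | i. i < length ws \<and> s ! i}" for s :: "bool list"
  have "sel ` {s. length s = card W} = Pow W"
  proof
    show "sel ` {s. length s = card W} \<subseteq> Pow W"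
      unfolding sel_def using ws(1) nth_mem by blast
    show "Pow W \<subseteq> sel ` {s. length s = card W}"
    proof
      fix S assume S: "S \<in> Pow W"
      have "S = sel (map (\<lambda>w. w \<in> S) ws)"
      proof
        show "sel (map (\<lambda>w. w \<in> S) ws) \<subseteq> S" unfolding sel_def by auto
        show "S \<subseteq> sel (map (\<lambda>w. w \<in> S) ws)"
        proof
          fix w assume "w \<in> S"
          with S ws(1) have "w \<in> set ws" by blast
          then obtain i where "i < length ws" "ws ! i = w" by (auto simp: in_set_conv_nth)
          with \<open>w \<in> S\<close> show "w \<in> sel (map (\<lambda>w. w \<in> S) ws)" unfolding sel_def by auto
        qed
      qed
      moreover have "map (\<lambda>w. w \<in> S) ws \<in> {s. length s = card W}" using len by simp
      ultimately show "S \<in> sel ` {s. length s = card W}" by (rule image_eqI)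
    qed
  qed
  then show ?thesis by blast
qed

lemma strongly_convex_quadratic_add_const:
  "strongly_convex_quadratic q \<Longrightarrow> strongly_convex_quadratic (\<lambda>\<alpha>. q \<alpha> + k)"
  unfolding strongly_convex_quadratic_def by (metis add.assoc)

lemma Inf_sparse_qp_values_eq_Min_strongly_convex:
  assumes fin: "finite V" and u: "u \<in> V" and lam_u: "lam u \<ge> 0"
    and sym: "symmetric_on Q V" and pd: "pos_def_on Q V"
  shows "\<exists>p :: bool list \<Rightarrow> real \<Rightarrow> real.
    (\<forall>s. length s = card V - 1 \<longrightarrow> strongly_convex_quadratic (p s)) \<and>
    (\<forall>\<alpha>. Inf (sparse_qp_values Q c lam V u \<alpha>) =
       Min ((\<lambda>s. p s \<alpha>) ` {s. length s = card V - 1}) + lam u * ind \<alpha>)"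
proof -
  have "\<forall>S\<in>Pow (V - {u}). \<exists>q. strongly_convex_quadratic q \<and>
      is_partial_min (\<lambda>x. qform Q (insert u S) x / 2 + lform c (insert u S) x + 0) u q"
  proof
    fix S assume S: "S \<in> Pow (V - {u})"
    then have "insert u S \<subseteq> V" using u by blast
    then have "symmetric_on Q (insert u S)" "pos_def_on Q (insert u S)"
      using sym pos_def_on_subset[OF fin _ pd] unfolding symmetric_on_def by blast+
    moreover have "finite S" "u \<notin> S" using S fin finite_subset by auto
    ultimately show "\<exists>q. strongly_convex_quadratic q \<and>
      is_partial_min (\<lambda>x. qform Q (insert u S) x / 2 + lform c (insert u S) x + 0) u q"
      by (intro quadratic_partial_min)
  qed
  from bchoice[OF this] obtain q where q: "\<forall>S\<in>Pow (V - {u}). strongly_convex_quadratic (q S) \<and>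
      is_partial_min (\<lambda>x. qform Q (insert u S) x / 2 + lform c (insert u S) x) u (q S)"
    by auto
  from fin have "finite (V - {u})" by blast
  from bool_lists_onto_Pow[OF this]
  obtain sel :: "bool list \<Rightarrow> 'a set"
    where sel: "sel ` {s. length s = card (V - {u})} = Pow (V - {u})" ..
  define p where "p s \<alpha> = q (sel s) \<alpha> + sum lam (sel s)" for s \<alpha>
  have card: "card (V - {u}) = card V - 1" using u fin by simp
  have "strongly_convex_quadratic (p s)" if "length s = card (V - {u})" for s
  proof -
    have "sel s \<in> Pow (V - {u})" using sel that by blast
    then show ?thesis unfolding p_def using q by (simp add: strongly_convex_quadratic_add_const)
  qed
  moreover have "Inf (sparse_qp_values Q c lam V u \<alpha>) =
      Min ((\<lambda>s. p s \<alpha>) ` {s. length s = card (V - {u})}) + lam u * ind \<alpha>" for \<alpha>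
  proof -
    have "Inf (sparse_qp_values Q c lam V u \<alpha>) =
        Min ((\<lambda>S. q S \<alpha> + sum lam S) ` Pow (V - {u})) + lam u * ind \<alpha>"
      using q by (intro Inf_sparse_qp_values_eq_Min[where lam = lam, OF fin u lam_u]) blast
    also have "(\<lambda>S. q S \<alpha> + sum lam S) ` Pow (V - {u}) = (\<lambda>s. p s \<alpha>) ` {s. length s = card (V - {u})}"
      unfolding sel[symmetric] p_def image_image ..
    finally show ?thesis .
  qed
  ultimately show ?thesis unfolding card by blast
qed

theorem lemma1:
  fixes n :: nat and Q :: "nat \<Rightarrow> nat \<Rightarrow> real" and c lam :: "nat \<Rightarrow> real"
  assumes n_pos: "n \<ge> 1"
    and sym: "\<forall>i\<in>{1..n}. \<forall>j\<in>{1..n}. Q i j = Q j i"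
    and posdef: "\<forall>x :: nat \<Rightarrow> real. (\<exists>i\<in>{1..n}. x i \<noteq> 0) \<longrightarrow>
                   (\<Sum>i\<in>{1..n}. \<Sum>j\<in>{1..n}. x i * Q i j * x j) > 0"
    and diag: "\<forall>i\<in>{1..n}. Q i i = 1"
    and tree: "supp_is_tree n Q"
    and topo: "\<forall>u\<in>{1..<n}. u < child n Q u"
    and lam_pos: "\<forall>i\<in>{1..n}. lam i > 0"
    and u: "u \<in> {1..n}"
  shows "\<exists>p :: bool list \<Rightarrow> real \<Rightarrow> real.
           (\<forall>s. length s = card (subtree n Q u) - 1 \<longrightarrow> strongly_convex_quadratic (p s)) \<and>
           (\<forall>\<alpha>. f_cost n Q c lam u \<alpha> =
                 Min ((\<lambda>s. p s \<alpha>) ` {s. length s = card (subtree n Q u) - 1}) + lam u * ind \<alpha>)"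
proof -
  define V where "V = subtree n Q u"
  have V: "V \<subseteq> {1..n}" "finite V" and uV: "u \<in> V"
    using mem_subtree_self[OF sym tree u] finite_subset unfolding V_def subtree_def by auto
  have "pos_def_on Q {1..n}" using posdef unfolding pos_def_on_def qform_def .
  then have pd: "pos_def_on Q V" by (rule pos_def_on_subset[OF finite_atLeastAtMost V(1)])
  have symV: "symmetric_on Q V" using sym V(1) unfolding symmetric_on_def by blast
  have "lam u \<ge> 0" using lam_pos u by (simp add: less_imp_le)
  from Inf_sparse_qp_values_eq_Min_strongly_convex[where lam = lam and c = c, OF V(2) uV this symV pd]
  show ?thesis unfolding f_cost_eq_Inf_sparse_qp_values V_def .
qed

end
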